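(* Let $V$ be a finite set with $n=|V|\ge 3$, and let $x=(V,E_x)$ and $y=(V,E_y)$ be two undirected Hamiltonian cycles on $V$. Let $E=E_x\uplus E_y$ be the edge multiset of the 4-regular multigraph $x\cup y$ (an edge lying in both cycles appears as two distinct parallel copies, one from $E_x$ and one from $E_y$); let $c=|E_x\cap E_y|$ be the number of edges common to both cycles, and let $E_x\setminus E_y$ (resp. $E_y\setminus E_x$) denote the copies coming from $x$ (resp. $y$) of edges that do not belong to the other cycle. For $v\in V$ let $E_v\subseteq E$ be the set of edge copies incident to $v$, and for $S\subseteq V$ let $E_S\subseteq E$ be the set of edge copies with both endpoints in $S$. Consider a vector $(x_e)_{e\in E}$ satisfying (1) $\sum_{e\in E}x_e=n$; (2) $\sum_{e\in E_v}x_e=2$ for all $v\in V$; (3) $\sum_{e\in E_x\setminus E_y}x_e\le n-c-2$; (4) $\sum_{e\in E_y\setminus E_x}x_e\le n-c-2$; (5) $\sum_{e\in E_S}x_e\le |S|-1$ for every $S\subsetneq V$ with $|S|\ge 2$; (6) $\sum_{e\in E_S}x_e\ge |E_S|-|S|+1$ for every $S\subsetneq V$ with $|S|\ge 2$; (7) $x_e\in\{0,1\}$ for all $e\in E$. Then a vector $(x_e)_{e\in E}\in\{0,1\}^E$ satisfies (1)–(7) if and only if, setting $z=\{e\in E: x_e=1\}$ and $w=\{e\in E:x_e=0\}$, both $z$ and $w$ are (edge sets of) Hamiltonian cycles on $V$ and the Hamiltonian cycle $z$ is different from both $x$ and $y$ (equivalently, $\{z,w\}$ is a Hamiltonian decomposition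 of $x\cup y$ into two edge-disjoint Hamiltonian cycles different from $x$ and $y$).
   Context: A Hamiltonian decomposition of a regular multigraph is a partition of its edge (multi)set into Hamiltonian cycles. For Hamiltonian cycles $x=(V,E_x)$, $y=(V,E_y)$ on the same vertex set, $x\cup y$ denotes the multigraph $(V,E_x\uplus E_y)$ containing all edges of both cycles (common edges with multiplicity 2). Two Hamiltonian cycles are considered equal if they have the same underlying edge set on $V$. *)

theory Defs
  imports Complex_Main
begin

definition ham_cycle :: "'a set \<Rightarrow> 'a set set \<Rightarrow> bool" where
  "ham_cycle V H \<longleftrightarrow> (\<exists>vs. distinct vs \<and> set vs = V \<and>
     H = {{vs ! i, vs ! (Suc i mod length vs)} | i. i < length vs})"

text \<open>Edge copies of the multigraph x \<union> y: an edge together with a tag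
(True = copy coming from x, False = copy coming from y).\<close>

definition union_copies :: "'a set set \<Rightarrow> 'a set set \<Rightarrow> ('a set \<times> bool) set" where
  "union_copies Exs Eys = (\<lambda>e. (e, True)) ` Exs \<union> (\<lambda>e. (e, False)) ` Eys"

definition ham_copies :: "'a set \<Rightarrow> ('a set \<times> bool) set \<Rightarrow> bool" where
  "ham_copies V Z \<longleftrightarrow> inj_on fst Z \<and> ham_cycle V (fst ` Z)"

end

theory Submission
  imports Defs
begin

(* A 0/1 vector satisfying the degree equations (2) splits the 4-regular multigraph x \<union> y
   into two spanning 2-regular subgraphs z (value 1) and w (value 0), and (1) is then automatic.
   The subtour constraints (5) and (6) say that neither z nor w has |S| or more edges inside a
   proper vertex set S. For a 2-regular graph this excludes cycles on proper subsets, so it is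
   Hamiltonian: a longest path closes up into a cycle, which must span V. Conversely a
   Hamiltonian cycle satisfies (5) because one of its edges leaves S. Finally (3) and (4) hold
   exactly when z differs from x and y: two distinct 2-regular graphs on V share at most n - 2
   edges, and every edge common to x and y lies in z, since its two copies cannot both lie in
   the simple cycle w. *)

section \<open>2-regular graphs\<close>

definition two_regular :: "'a set \<Rightarrow> 'a set set \<Rightarrow> bool" where
  "two_regular V F \<longleftrightarrow>
     (\<forall>e\<in>F. e \<subseteq> V \<and> card e = 2) \<and> (\<forall>v\<in>V. card {e\<in>F. v \<in> e} = 2)"

lemma finite_edge_set: "finite V \<Longrightarrow> \<forall>e\<in>F. e \<subseteq> V \<Longrightarrow> finite F"
  by (rule finite_subset[of F "Pow V"]) auto

lemma two_regular_finite: "finite V \<Longrightarrow> two_regular V F \<Longrightarrow> finite F"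
  unfolding two_regular_def using finite_edge_set by blast

lemma sum_degree_eq_sum_card_Int:
  assumes "finite V" "\<forall>e\<in>F. e \<subseteq> V" "S \<subseteq> V"
  shows "(\<Sum>v\<in>S. card {e\<in>F. v \<in> e}) = (\<Sum>e\<in>F. card (e \<inter> S))"
proof -
  have fF: "finite F" using finite_edge_set assms(1,2) .
  have fS: "finite S" using assms(1,3) finite_subset by blast
  have "(\<Sum>v\<in>S. card {e\<in>F. v \<in> e}) = (\<Sum>v\<in>S. \<Sum>e\<in>F. if v \<in> e then 1 else 0)"
    using fF by (intro sum.cong refl) (simp add: sum.inter_filter[symmetric])
  also have "\<dots> = (\<Sum>e\<in>F. \<Sum>v\<in>S. if v \<in> e then 1 else 0)"
    by (rule sum.swap)
  also have "\<dots> = (\<Sum>e\<in>F. card (e \<inter> S))"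
  proof (intro sum.cong refl)
    fix e
    have "(\<Sum>v\<in>S. if v \<in> e then 1 else 0) = card {v\<in>S. v \<in> e}"
      using fS by (simp add: sum.inter_filter[symmetric])
    also have "{v\<in>S. v \<in> e} = e \<inter> S" by auto
    finally show "(\<Sum>v\<in>S. if v \<in> e then 1 else 0) = card (e \<inter> S)" .
  qed
  finally show ?thesis .
qed

lemma two_regular_card_edges:
  assumes "finite V" "two_regular V F"
  shows "card F = card V"
proof -
  have "2 * card V = (\<Sum>v\<in>V. card {e\<in>F. v \<in> e})"
    using assms(2) unfolding two_regular_def by simp
  also have "\<dots> = (\<Sum>e\<in>F. card (e \<inter> V))"
    using assms unfolding two_regular_def by (intro sum_degree_eq_sum_card_Int) auto
  also have "\<dots> = 2 * card F"
    using assms(2) unfolding two_regular_def by (simp add: Int_absorb2)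
  finally show ?thesis by simp
qed

lemma two_regular_subset_eq:
  assumes "finite V" "two_regular V H" "two_regular V F" "H \<subseteq> F"
  shows "H = F"
  using card_subset_eq[OF two_regular_finite[OF assms(1,3)] assms(4)]
    two_regular_card_edges[OF assms(1,2)] two_regular_card_edges[OF assms(1,3)] by simp

lemma two_regular_card_inside_less:
  assumes fV: "finite V" and reg: "two_regular V F" and S: "S \<subseteq> V"
    and crossing: "e0 \<in> F" "card (e0 \<inter> S) = 1"
  shows "card {e\<in>F. e \<subseteq> S} < card S"
proof -
  let ?inside = "{e\<in>F. e \<subseteq> S}"
  have edges: "\<forall>e\<in>F. e \<subseteq> V \<and> card e = 2"
    using reg unfolding two_regular_def by blast
  have fF: "finite F" using two_regular_finite fV reg by blast
  have "2 * card S = (\<Sum>v\<in>S. card {e\<in>F. v \<in> e})"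
    using reg S unfolding two_regular_def by (simp add: subset_iff)
  also have "\<dots> = (\<Sum>e\<in>F. card (e \<inter> S))"
    using sum_degree_eq_sum_card_Int fV edges S by blast
  also have "\<dots> = (\<Sum>e\<in>?inside. card (e \<inter> S)) + (\<Sum>e\<in>F - ?inside. card (e \<inter> S))"
    using fF by (subst sum.subset_diff[of ?inside]) auto
  also have "(\<Sum>e\<in>?inside. card (e \<inter> S)) = 2 * card ?inside"
    using edges by (simp add: Int_absorb2)
  finally have "2 * card S = 2 * card ?inside + (\<Sum>e\<in>F - ?inside. card (e \<inter> S))" .
  moreover have "card (e0 \<inter> S) \<le> (\<Sum>e\<in>F - ?inside. card (e \<inter> S))"
    using crossing edges fF by (intro member_le_sum) (auto simp: Int_absorb2)
  ultimately show ?thesis using crossing by linarith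
qed

lemma card_2_obtain_other:
  assumes "card e = 2" "v \<in> e"
  obtains u where "u \<noteq> v" "e = {v, u}"
proof -
  obtain x y where xy: "e = {x, y}" "x \<noteq> y" using assms(1) by (meson card_2_iff)
  then show ?thesis using that assms(2) by (metis insert_commute insertE singletonD)
qed

lemma two_regular_edge_ends:
  assumes "two_regular V F" "{u, v} \<in> F"
  shows "u \<noteq> v" "u \<in> V" "v \<in> V"
  using assms unfolding two_regular_def by (fastforce simp: card_insert_if)+

lemma two_regular_other_neighbour:
  assumes reg: "two_regular V F" and v: "v \<in> V" and p: "{v, p} \<in> F"
  obtains u where "u \<noteq> p" "{v, u} \<in> F"
proof -
  have "card {e\<in>F. v \<in> e} = 2" using reg v unfolding two_regular_def by blast
  then obtain x y where "{e\<in>F. v \<in> e} = {x, y}" "x \<noteq> y" by (meson card_2_iff)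
  then obtain e where e: "e \<in> F" "v \<in> e" "e \<noteq> {v, p}" by blast
  moreover obtain u where "e = {v, u}"
    using e reg card_2_obtain_other unfolding two_regular_def by metis
  ultimately show ?thesis using that[of u] by auto
qed

lemma two_regular_incident_edges:
  assumes reg: "two_regular V F" and v: "v \<in> V"
    and edges: "{v, a} \<in> F" "{v, b} \<in> F" and ab: "a \<noteq> b"
  shows "{e\<in>F. v \<in> e} = {{v, a}, {v, b}}"
proof -
  have card2: "card {e\<in>F. v \<in> e} = 2" using reg v unfolding two_regular_def by blast
  have "{v, a} \<noteq> {v, b}" using ab by (simp add: doubleton_eq_iff)
  then have "card {{v, a}, {v, b}} = card {e\<in>F. v \<in> e}" using card2 by simp
  moreover have "{{v, a}, {v, b}} \<subseteq> {e\<in>F. v \<in> e}" using edges by auto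
  moreover have "finite {e\<in>F. v \<in> e}" using card2 by (intro card_ge_0_finite) simp
  ultimately show ?thesis by (metis card_subset_eq)
qed

lemma two_regular_Diff_singletons_eq:
  assumes fV: "finite V" and reg1: "two_regular V H1" and reg2: "two_regular V H2"
    and e1: "H1 - H2 = {e1}" and e2: "H2 - H1 = {e2}"
  shows "e1 = e2"
proof -
  have f: "finite H1" using two_regular_finite[OF fV reg1] .
  have degree: "card {e\<in>H. v \<in> e} = card {e\<in>H1 \<inter> H2. v \<in> e} + (if v \<in> d then 1 else 0)"
    if "H = insert d (H1 \<inter> H2)" "d \<notin> H1 \<inter> H2" for H d v
  proof (cases "v \<in> d")
    case True
    then have "{e\<in>H. v \<in> e} = insert d {e\<in>H1 \<inter> H2. v \<in> e}" using that(1) by auto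
    moreover have "finite {e\<in>H1 \<inter> H2. v \<in> e}" by (rule finite_subset[OF _ f]) auto
    ultimately show ?thesis using True that(2) by (simp add: card_insert_disjoint)
  next
    case False
    then have "{e\<in>H. v \<in> e} = {e\<in>H1 \<inter> H2. v \<in> e}" using that(1) by auto
    then show ?thesis using False by simp
  qed
  have h1: "H1 = insert e1 (H1 \<inter> H2)" "e1 \<notin> H1 \<inter> H2" using e1 by auto
  have h2: "H2 = insert e2 (H1 \<inter> H2)" "e2 \<notin> H1 \<inter> H2" using e2 by auto
  have same_ends: "v \<in> e1 \<longleftrightarrow> v \<in> e2" if "v \<in> V" for v
  proof -
    have "card {e\<in>H1. v \<in> e} = 2" "card {e\<in>H2. v \<in> e} = 2"
      using reg1 reg2 that unfolding two_regular_def by auto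
    then show ?thesis
      using degree[OF h1, of v] degree[OF h2, of v] by (cases "v \<in> e1"; cases "v \<in> e2") simp_all
  qed
  have "e1 \<in> H1" "e2 \<in> H2" using e1 e2 by blast+
  then have "e1 \<subseteq> V" "e2 \<subseteq> V" using reg1 reg2 unfolding two_regular_def by blast+
  then show "e1 = e2" using same_ends by (intro set_eqI) (meson subsetD)
qed

lemma two_regular_card_Int_le:
  assumes fV: "finite V" and reg1: "two_regular V H1" and reg2: "two_regular V H2"
    and ne: "H1 \<noteq> H2"
  shows "card (H1 \<inter> H2) + 2 \<le> card V"
proof (rule ccontr)
  assume few: "\<not> card (H1 \<inter> H2) + 2 \<le> card V"
  have c1: "card H1 = card V" and c2: "card H2 = card V"
    using two_regular_card_edges[OF fV] reg1 reg2 by simp_all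
  have f1: "finite H1" and f2: "finite H2" using two_regular_finite fV reg1 reg2 by auto
  have "card (H1 - H2) + card (H1 \<inter> H2) = card V" "card (H2 - H1) + card (H1 \<inter> H2) = card V"
    using card_Int_Diff[OF f1, of H2] card_Int_Diff[OF f2, of H1] c1 c2 by (simp_all add: Int_commute)
  moreover have "H1 - H2 \<noteq> {}"
  proof
    assume "H1 - H2 = {}"
    then have "H1 \<subseteq> H2" by blast
    then show False using two_regular_subset_eq[OF fV reg1 reg2] ne by blast
  qed
  then have "card (H1 - H2) \<noteq> 0" using f1 by simp
  ultimately have "card (H1 - H2) = 1" "card (H2 - H1) = 1" using few by linarith+
  then obtain e1 e2 where diff: "H1 - H2 = {e1}" "H2 - H1 = {e2}" by (meson card_1_singletonE)
  then have "e1 = e2" using two_regular_Diff_singletons_eq[OF fV reg1 reg2] by blast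
  then show False using diff by blast
qed


section \<open>The cycle through a list of vertices\<close>

definition cycle_edges :: "'a list \<Rightarrow> 'a set set" where
  "cycle_edges vs = {{vs ! i, vs ! (Suc i mod length vs)} | i. i < length vs}"

lemma ham_cycle_iff_cycle_edges:
  "ham_cycle V H \<longleftrightarrow> (\<exists>vs. distinct vs \<and> set vs = V \<and> H = cycle_edges vs)"
  unfolding ham_cycle_def cycle_edges_def ..

lemma Suc_mod_length: "i < n \<Longrightarrow> Suc i mod n = (if Suc i = n then 0 else Suc i)"
  by (simp add: mod_Suc)

lemma card_cycle_edge:
  assumes d: "distinct vs" and n3: "3 \<le> length vs" and i: "i < length vs"
  shows "card {vs ! i, vs ! (Suc i mod length vs)} = 2"
proof -
  have "Suc i mod length vs \<noteq> i" "Suc i mod length vs < length vs"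
    using Suc_mod_length[OF i] n3 i by auto
  then have "vs ! i \<noteq> vs ! (Suc i mod length vs)" using d i nth_eq_iff_index_eq by metis
  then show ?thesis by simp
qed

lemma cycle_edges_degree:
  assumes d: "distinct vs" and n3: "3 \<le> length vs" and v: "v \<in> set vs"
  shows "card {e\<in>cycle_edges vs. v \<in> e} = 2"
proof -
  define n where "n = length vs"
  define ed where "ed i = {vs ! i, vs ! (Suc i mod n)}" for i
  have edges: "cycle_edges vs = ed ` {..<n}" unfolding cycle_edges_def ed_def n_def by auto
  have index_eq: "vs ! i = vs ! j \<longleftrightarrow> i = j" if "i < n" "j < n" for i j
    using d that n_def nth_eq_iff_index_eq by metis
  note succ = Suc_mod_length[where n = n]
  obtain j where j: "j < n" "v = vs ! j" using v n_def by (metis in_set_conv_nth)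
  define p where "p = (if j = 0 then n - 1 else j - 1)"
  have p: "p < n" "Suc p mod n = j" using j n3 succ unfolding p_def n_def by auto
  have "{e\<in>cycle_edges vs. v \<in> e} = {ed j, ed p}"
  proof (intro equalityI subsetI)
    fix e assume "e \<in> {e\<in>cycle_edges vs. v \<in> e}"
    then obtain i where i: "i < n" "e = ed i" "v \<in> ed i" using edges by auto
    then have "j = i \<or> j = Suc i mod n"
      using j index_eq[of j i] index_eq[of j "Suc i mod n"] unfolding ed_def by auto
    then have "i = j \<or> i = p"
      using i(1) j(1) succ[OF i(1)] unfolding p_def by (auto split: if_splits)
    then show "e \<in> {ed j, ed p}" using i by auto
  qed (use j p edges ed_def in auto)
  moreover have "ed j \<noteq> ed p"
  proof
    assume same: "ed j = ed p"
    have "Suc j mod n \<noteq> j" "Suc j mod n < n" using j n3 succ[OF j(1)] unfolding n_def by auto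
    then have "vs ! (Suc j mod n) \<noteq> vs ! j" using index_eq j by simp
    moreover have "vs ! (Suc j mod n) \<in> ed p" using same unfolding ed_def by blast
    ultimately have "vs ! (Suc j mod n) = vs ! p" using p(2) unfolding ed_def by auto
    then have "Suc j mod n = p" using index_eq p j by simp
    then show False using j n3 succ[OF j(1)] unfolding p_def n_def by (auto split: if_splits)
  qed
  ultimately show ?thesis by simp
qed

lemma cycle_edges_two_regular:
  assumes "distinct vs" "3 \<le> length vs"
  shows "two_regular (set vs) (cycle_edges vs)"
  unfolding two_regular_def
proof (intro conjI ballI)
  fix e assume "e \<in> cycle_edges vs"
  then obtain i where i: "i < length vs" "e = {vs ! i, vs ! (Suc i mod length vs)}"
    unfolding cycle_edges_def by blast
  moreover have "Suc i mod length vs < length vs" using i(1) by (auto simp: Suc_mod_length)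
  ultimately show "e \<subseteq> set vs" "card e = 2" using card_cycle_edge[OF assms] by auto
qed (use cycle_edges_degree[OF assms] in blast)

lemma ham_cycle_two_regular:
  assumes "ham_cycle V H" "card V \<ge> 3"
  shows "two_regular V H"
  using assms cycle_edges_two_regular distinct_card
  unfolding ham_cycle_iff_cycle_edges by metis

lemma cyclic_exit_index:
  assumes "set vs \<inter> S \<noteq> {}" "\<not> set vs \<subseteq> S"
  shows "\<exists>i<length vs. vs ! i \<in> S \<and> vs ! (Suc i mod length vs) \<notin> S"
proof (rule ccontr)
  assume "\<not> ?thesis"
  then have closed: "\<And>i. i < length vs \<Longrightarrow> vs ! i \<in> S \<Longrightarrow> vs ! (Suc i mod length vs) \<in> S"
    by blast
  define n where "n = length vs"
  obtain j where j: "j < n" "vs ! j \<in> S"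
    using assms(1) n_def by (metis disjoint_iff in_set_conv_nth)
  then have n0: "n > 0" by simp
  have all: "vs ! ((j + k) mod n) \<in> S" for k
  proof (induction k)
    case 0 then show ?case using j by simp
  next
    case (Suc k)
    then have "vs ! (Suc ((j + k) mod n) mod n) \<in> S" using closed n0 n_def by simp
    then show ?case by (simp add: mod_Suc_eq)
  qed
  have "set vs \<subseteq> S"
  proof
    fix v assume "v \<in> set vs"
    then obtain i where i: "i < n" "v = vs ! i" using n_def by (metis in_set_conv_nth)
    have "(j + (i + n - j)) mod n = i" using i j by simp
    then show "v \<in> S" using all[of "i + n - j"] i by simp
  qed
  then show False using assms(2) by contradiction
qed

lemma ham_cycle_crossing_edge:
  assumes "ham_cycle V H" "S \<subset> V" "S \<noteq> {}"
  obtains e where "e \<in> H" "card (e \<inter> S) = 1"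
proof -
  obtain vs where vs: "distinct vs" "set vs = V" "H = cycle_edges vs"
    using assms(1) unfolding ham_cycle_iff_cycle_edges by blast
  then obtain i where i: "i < length vs" "vs ! i \<in> S" "vs ! (Suc i mod length vs) \<notin> S"
    using cyclic_exit_index[of vs S] assms(2,3) by blast
  show ?thesis
  proof
    show "{vs ! i, vs ! (Suc i mod length vs)} \<in> H" using vs(3) i(1) unfolding cycle_edges_def by auto
    have "{vs ! i, vs ! (Suc i mod length vs)} \<inter> S = {vs ! i}" using i by auto
    then show "card ({vs ! i, vs ! (Suc i mod length vs)} \<inter> S) = 1" by simp
  qed
qed

lemma ham_cycle_card_inside_less:
  assumes "finite V" "ham_cycle V H" "card V \<ge> 3" "S \<subset> V" "S \<noteq> {}"
  shows "card {e\<in>H. e \<subseteq> S} < card S"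
proof -
  obtain e where "e \<in> H" "card (e \<inter> S) = 1"
    using ham_cycle_crossing_edge assms(2,4,5) .
  then show ?thesis
    using two_regular_card_inside_less ham_cycle_two_regular assms by blast
qed


section \<open>A 2-regular graph without short cycles is Hamiltonian\<close>

definition graph_path :: "'a set \<Rightarrow> 'a set set \<Rightarrow> 'a list \<Rightarrow> bool" where
  "graph_path V F xs \<longleftrightarrow>
     distinct xs \<and> set xs \<subseteq> V \<and> (\<forall>i. Suc i < length xs \<longrightarrow> {xs ! i, xs ! Suc i} \<in> F)"

lemma graph_path_length_le: "finite V \<Longrightarrow> graph_path V F xs \<Longrightarrow> length xs \<le> card V"
  unfolding graph_path_def by (metis card_mono distinct_card)

lemma graph_path_snoc:
  assumes "graph_path V F xs" "xs \<noteq> []" "u \<notin> set xs" "u \<in> V" "{last xs, u} \<in> F"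
  shows "graph_path V F (xs @ [u])"
  using assms unfolding graph_path_def
  by (auto simp: nth_append last_conv_nth less_Suc_eq dest: sym[of "Suc _"])

lemma two_regular_path_length_3:
  assumes reg: "two_regular V F" and v: "v \<in> V"
  obtains xs where "graph_path V F xs" "length xs = 3"
proof -
  have "card {e\<in>F. v \<in> e} = 2" using reg v unfolding two_regular_def by blast
  then obtain x y where "{e\<in>F. v \<in> e} = {x, y}" by (meson card_2_iff)
  then have x: "x \<in> F" "v \<in> x" by blast+
  then have "card x = 2" using reg unfolding two_regular_def by blast
  then obtain a where "x = {v, a}" using card_2_obtain_other x(2) by metis
  then have a: "{v, a} \<in> F" using x by simp
  obtain b where b: "b \<noteq> a" "{v, b} \<in> F" using two_regular_other_neighbour reg v a .
  have "a \<noteq> v" "b \<noteq> v" "a \<in> V" "b \<in> V"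
    using two_regular_edge_ends[OF reg a] two_regular_edge_ends[OF reg b(2)] by auto
  then have "graph_path V F [a, v, b]"
    using a b v unfolding graph_path_def by (auto simp: less_Suc_eq insert_commute)
  then show ?thesis using that by simp
qed

lemma two_regular_longest_path:
  assumes fV: "finite V" and reg: "two_regular V F" and ne: "V \<noteq> {}"
  obtains vs where "graph_path V F vs" "3 \<le> length vs" "\<And>u. \<not> graph_path V F (vs @ [u])"
proof -
  obtain v where v: "v \<in> V" using ne by blast
  obtain xs3 where xs3: "graph_path V F xs3" "length xs3 = 3"
    using two_regular_path_length_3[OF reg v] by metis
  have "\<exists>vs. graph_path V F vs \<and> (\<forall>ys. graph_path V F ys \<longrightarrow> length ys \<le> length vs)"
    by (rule Lattices_Big.ex_has_greatest_nat[of "graph_path V F", OF xs3(1), where b = "Suc (card V)"])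
      (use graph_path_length_le[OF fV] in \<open>simp add: less_Suc_eq_le\<close>)
  then obtain vs where path: "graph_path V F vs"
    and longest: "\<And>ys. graph_path V F ys \<Longrightarrow> length ys \<le> length vs" by blast
  have "3 \<le> length vs" using longest[OF xs3(1)] xs3(2) by simp
  moreover have "\<not> graph_path V F (vs @ [u])" for u using longest[of "vs @ [u]"] by auto
  ultimately show ?thesis using that path by blast
qed

lemma path_interior_incident_edges:
  assumes reg: "two_regular V F" and path: "graph_path V F vs"
    and j: "0 < j" "Suc j < length vs"
  shows "{e\<in>F. vs ! j \<in> e} = {{vs ! j, vs ! (j - 1)}, {vs ! j, vs ! Suc j}}"
proof (rule two_regular_incident_edges[OF reg])
  have d: "distinct vs" and inV: "set vs \<subseteq> V"
    and step: "\<And>i. Suc i < length vs \<Longrightarrow> {vs ! i, vs ! Suc i} \<in> F"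
    using path unfolding graph_path_def by auto
  show "vs ! j \<in> V" using inV j nth_mem by fastforce
  show "{vs ! j, vs ! (j - 1)} \<in> F" using step[of "j - 1"] j by (simp add: insert_commute)
  show "{vs ! j, vs ! Suc j} \<in> F" using step[of j] j by simp
  show "vs ! (j - 1) \<noteq> vs ! Suc j" using d j nth_eq_iff_index_eq[OF d, of "j - 1" "Suc j"] by simp
qed

lemma maximal_path_closes:
  assumes reg: "two_regular V F" and path: "graph_path V F vs" and len: "3 \<le> length vs"
    and maximal: "\<And>u. \<not> graph_path V F (vs @ [u])"
  shows "{last vs, hd vs} \<in> F"
proof -
  define k where "k = length vs - 1"
  have k: "k < length vs" "2 \<le> k" using len unfolding k_def by auto
  have d: "distinct vs" and inV: "set vs \<subseteq> V"
    and step: "\<And>i. Suc i < length vs \<Longrightarrow> {vs ! i, vs ! Suc i} \<in> F"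
    using path unfolding graph_path_def by auto
  have index_eq: "vs ! i = vs ! j \<longleftrightarrow> i = j" if "i < length vs" "j < length vs" for i j
    using d that nth_eq_iff_index_eq by blast
  have ne: "vs \<noteq> []" using len by auto
  then have last: "last vs = vs ! k" and hd: "hd vs = vs ! 0"
    unfolding k_def by (simp_all add: last_conv_nth hd_conv_nth)
  have lV: "vs ! k \<in> V" using inV k nth_mem by blast
  have "{vs ! k, vs ! (k - 1)} \<in> F" using step[of "k - 1"] k by (simp add: insert_commute)
  then obtain u where u: "u \<noteq> vs ! (k - 1)" "{vs ! k, u} \<in> F"
    using two_regular_other_neighbour[OF reg lV] by blast
  note u_ends = two_regular_edge_ends[OF reg u(2)]
  have "u \<in> set vs"
  proof (rule ccontr)
    assume "u \<notin> set vs"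
    then have "graph_path V F (vs @ [u])"
      using graph_path_snoc[OF path ne] u_ends(3) u(2) last by simp
    then show False using maximal by blast
  qed
  then obtain j where j: "j < length vs" "u = vs ! j" by (metis in_set_conv_nth)
  have "j \<noteq> k" using u_ends(1) j by blast
  moreover have "j \<noteq> k - 1" using u j by blast
  moreover have "j = 0"
  proof (rule ccontr)
    assume "j \<noteq> 0"
    with calculation have inner: "0 < j" "Suc j < length vs" "Suc j < k"
      using j k unfolding k_def by auto
    have "{vs ! j, vs ! k} \<in> {e\<in>F. vs ! j \<in> e}" using u(2) j(2) by (simp add: insert_commute)
    then have "vs ! k = vs ! (j - 1) \<or> vs ! k = vs ! Suc j"
      unfolding path_interior_incident_edges[OF reg path inner(1,2)]
      using u_ends(1) j(2) by (auto simp: doubleton_eq_iff)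
    then show False using index_eq inner k by force
  qed
  ultimately show ?thesis using u j last hd by simp
qed

lemma closed_path_cycle_edges_subset:
  assumes path: "graph_path V F vs" and closed: "{last vs, hd vs} \<in> F" and ne: "vs \<noteq> []"
  shows "cycle_edges vs \<subseteq> F"
  unfolding cycle_edges_def
proof clarify
  fix i assume i: "i < length vs"
  show "{vs ! i, vs ! (Suc i mod length vs)} \<in> F"
  proof (cases "Suc i < length vs")
    case True
    then show ?thesis using path unfolding graph_path_def by simp
  next
    case False
    then have "Suc i = length vs" using i by simp
    then have "i = length vs - 1" "Suc i mod length vs = 0" by auto
    then show ?thesis using closed ne by (simp add: last_conv_nth hd_conv_nth)
  qed
qed

lemma two_regular_ham_cycle:
  assumes fV: "finite V" and n3: "card V \<ge> 3" and reg: "two_regular V F"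
    and subtour: "\<forall>S. S \<subset> V \<and> 2 \<le> card S \<longrightarrow> card {e\<in>F. e \<subseteq> S} < card S"
  shows "ham_cycle V F"
proof -
  have "V \<noteq> {}" using n3 by (intro notI) simp
  then obtain vs where path: "graph_path V F vs" and len: "3 \<le> length vs"
    and maximal: "\<And>u. \<not> graph_path V F (vs @ [u])"
    using two_regular_longest_path[OF fV reg] by blast
  have d: "distinct vs" and sV: "set vs \<subseteq> V" using path unfolding graph_path_def by auto
  have "vs \<noteq> []" using len by auto
  then have CF: "cycle_edges vs \<subseteq> F"
    using closed_path_cycle_edges_subset[OF path maximal_path_closes[OF reg path len maximal]] by blast
  have regC: "two_regular (set vs) (cycle_edges vs)" using cycle_edges_two_regular[OF d len] .
  have "set vs = V"
  proof (rule ccontr)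
    assume "set vs \<noteq> V"
    then have "card {e\<in>F. e \<subseteq> set vs} < card (set vs)"
      using subtour[rule_format, of "set vs"] sV len distinct_card[OF d] by auto
    moreover have "cycle_edges vs \<subseteq> {e\<in>F. e \<subseteq> set vs}"
      using CF regC unfolding two_regular_def by blast
    then have "card (cycle_edges vs) \<le> card {e\<in>F. e \<subseteq> set vs}"
      using two_regular_finite[OF fV reg] by (intro card_mono) auto
    ultimately show False using two_regular_card_edges[OF _ regC] by simp
  qed
  then have "cycle_edges vs = F" using two_regular_subset_eq[OF fV _ reg CF] regC by simp
  then show ?thesis unfolding ham_cycle_iff_cycle_edges using d \<open>set vs = V\<close> by blast
qed


section \<open>Binary vectors on the edge copies of x \<union> y\<close>

lemma sum_binary_eq_card:
  assumes "finite A" "\<forall>e\<in>A. X e \<in> {0, 1::real}"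
  shows "sum X A = real (card {e\<in>A. X e = 1})"
proof -
  have "sum X A = (\<Sum>e\<in>A. if X e = 1 then 1 else 0)"
    using assms(2) by (intro sum.cong refl) auto
  also have "\<dots> = (\<Sum>e\<in>{e\<in>A. X e = 1}. 1)"
    using assms(1) by (rule sum.inter_filter[symmetric])
  finally show ?thesis by simp
qed

lemma card_binary_partition:
  assumes "finite A" "\<forall>e\<in>A. X e \<in> {0, 1::real}"
  shows "card A = card {e\<in>A. X e = 1} + card {e\<in>A. X e = 0}"
proof -
  have "A = {e\<in>A. X e = 1} \<union> {e\<in>A. X e = 0}" using assms(2) by auto
  moreover have "card ({e\<in>A. X e = 1} \<union> {e\<in>A. X e = 0})
      = card {e\<in>A. X e = 1} + card {e\<in>A. X e = 0}"
    using assms(1) by (intro card_Un_disjoint) auto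
  ultimately show ?thesis by simp
qed

lemma card_filter_inj_fst:
  assumes "inj_on fst Y"
  shows "card {e\<in>Y. P (fst e)} = card {f\<in>fst ` Y. P f}"
proof -
  have "inj_on fst {e\<in>Y. P (fst e)}" using assms by (rule inj_on_subset) auto
  then have "card {e\<in>Y. P (fst e)} = card (fst ` {e\<in>Y. P (fst e)})" by (simp add: card_image)
  also have "fst ` {e\<in>Y. P (fst e)} = {f\<in>fst ` Y. P f}" by auto
  finally show ?thesis .
qed

lemma card_Diff_add_card_Int_le:
  assumes "finite A" "B \<inter> C \<subseteq> A" "A - C \<subseteq> B"
  shows "card (A - C) + card (B \<inter> C) \<le> card (A \<inter> B)"
proof -
  have "card ((A - C) \<union> (B \<inter> C)) \<le> card (A \<inter> B)"
    using assms by (intro card_mono) auto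
  moreover have "card ((A - C) \<union> (B \<inter> C)) = card (A - C) + card (B \<inter> C)"
    using assms by (intro card_Un_disjoint) (auto intro: finite_subset)
  ultimately show ?thesis by simp
qed

lemma mem_union_copies [simp]:
  "(f, b) \<in> union_copies Exs Eys \<longleftrightarrow> (if b then f \<in> Exs else f \<in> Eys)"
  unfolding union_copies_def by auto

lemma ham_copies_if_degree_subtour:
  assumes fV: "finite V" and n3: "card V \<ge> 3" and fY: "finite Y"
    and edges: "\<forall>y\<in>Y. fst y \<subseteq> V \<and> card (fst y) = 2"
    and degree: "\<forall>v\<in>V. card {e\<in>Y. v \<in> fst e} = 2"
    and subtour: "\<forall>S. S \<subset> V \<and> 2 \<le> card S \<longrightarrow> card {e\<in>Y. fst e \<subseteq> S} < card S"
  shows "ham_copies V Y"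
proof -
  have inj: "inj_on fst Y"
  proof
    fix a b assume ab: "a \<in> Y" "b \<in> Y" "fst a = fst b"
    have "card (fst a) = 2" "fst a \<subseteq> V" using edges ab(1) by auto
    moreover from this have "fst a \<noteq> V" using n3 by auto
    ultimately have "card {e\<in>Y. fst e \<subseteq> fst a} < 2"
      using subtour[rule_format, of "fst a"] by auto
    moreover have "card {a, b} \<le> card {e\<in>Y. fst e \<subseteq> fst a}"
      using ab fY by (intro card_mono) auto
    ultimately show "a = b" by (cases "a = b") auto
  qed
  have "two_regular V (fst ` Y)"
    unfolding two_regular_def
  proof (intro conjI ballI)
    fix v assume "v \<in> V"
    then show "card {f\<in>fst ` Y. v \<in> f} = 2"
      using degree card_filter_inj_fst[OF inj, of "\<lambda>f. v \<in> f"] by simp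
  qed (use edges in auto)
  moreover have "card {f\<in>fst ` Y. f \<subseteq> S} < card S" if "S \<subset> V" "2 \<le> card S" for S
    using that subtour[rule_format, of S] card_filter_inj_fst[OF inj, of "\<lambda>f. f \<subseteq> S"] by simp
  ultimately have "ham_cycle V (fst ` Y)" by (intro two_regular_ham_cycle[OF fV n3]) auto
  then show ?thesis unfolding ham_copies_def using inj by blast
qed

locale two_ham_cycles =
  fixes V :: "'a set" and Exs Eys :: "'a set set" and X :: "'a set \<times> bool \<Rightarrow> real"
  assumes finite_V: "finite V" and card_V: "card V \<ge> 3"
    and ham_x: "ham_cycle V Exs" and ham_y: "ham_cycle V Eys"
    and binary: "\<forall>e \<in> union_copies Exs Eys. X e \<in> {0, 1}"
begin

abbreviation copies :: "('a set \<times> bool) set" where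
  "copies \<equiv> union_copies Exs Eys"

definition ones :: "('a set \<times> bool) set" where
  "ones = {e \<in> copies. X e = 1}"

definition zeros :: "('a set \<times> bool) set" where
  "zeros = {e \<in> copies. X e = 0}"

lemma two_regular_x: "two_regular V Exs" and two_regular_y: "two_regular V Eys"
  using ham_cycle_two_regular ham_x ham_y card_V by auto

lemma finite_x: "finite Exs" and finite_y: "finite Eys"
  using two_regular_finite finite_V two_regular_x two_regular_y by auto

lemma finite_copies: "finite copies"
  unfolding union_copies_def using finite_x finite_y by simp

lemma copy_edge: "e \<in> copies \<Longrightarrow> fst e \<subseteq> V \<and> card (fst e) = 2"
  using two_regular_x two_regular_y unfolding two_regular_def union_copies_def by auto

lemma sum_X_filter: "(\<Sum>e\<in>{e\<in>copies. P e}. X e) = real (card {e\<in>ones. P e})"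
proof -
  have "(\<Sum>e\<in>{e\<in>copies. P e}. X e) = real (card {e\<in>{e\<in>copies. P e}. X e = 1})"
    using finite_copies binary by (intro sum_binary_eq_card) auto
  also have "{e\<in>{e\<in>copies. P e}. X e = 1} = {e\<in>ones. P e}" unfolding ones_def by auto
  finally show ?thesis .
qed

lemma card_copies_filter: "card {e\<in>copies. P e} = card {e\<in>ones. P e} + card {e\<in>zeros. P e}"
proof -
  have "card {e\<in>copies. P e} = card {e\<in>{e\<in>copies. P e}. X e = 1} + card {e\<in>{e\<in>copies. P e}. X e = 0}"
    using finite_copies binary by (intro card_binary_partition) auto
  also have "{e\<in>{e\<in>copies. P e}. X e = 1} = {e\<in>ones. P e}" unfolding ones_def by auto
  also have "{e\<in>{e\<in>copies. P e}. X e = 0} = {e\<in>zeros. P e}" unfolding zeros_def by auto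
  finally show ?thesis .
qed

lemma degree_copies:
  assumes "v \<in> V"
  shows "card {e\<in>copies. v \<in> fst e} = 4"
proof -
  let ?xs = "(\<lambda>f. (f, True)) ` {f\<in>Exs. v \<in> f}" and ?ys = "(\<lambda>f. (f, False)) ` {f\<in>Eys. v \<in> f}"
  have "{e\<in>copies. v \<in> fst e} = ?xs \<union> ?ys"
  proof (intro equalityI subsetI)
    fix e assume "e \<in> {e\<in>copies. v \<in> fst e}"
    moreover obtain f b where "e = (f, b)" by fastforce
    ultimately show "e \<in> ?xs \<union> ?ys" by (cases b) auto
  qed auto
  moreover have "card ?xs = 2"
    using two_regular_x assms unfolding two_regular_def by (simp add: card_image inj_on_def)
  moreover have "card ?ys = 2"
    using two_regular_y assms unfolding two_regular_def by (simp add: card_image inj_on_def)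
  moreover have "card (?xs \<union> ?ys) = card ?xs + card ?ys"
    using finite_x finite_y by (intro card_Un_disjoint) auto
  ultimately show ?thesis by simp
qed

lemma x_only_copies: "(\<lambda>f. (f, True)) ` (Exs - Eys) = {e\<in>copies. fst e \<notin> Eys}"
proof (intro equalityI subsetI)
  fix e assume "e \<in> {e\<in>copies. fst e \<notin> Eys}"
  moreover obtain f b where "e = (f, b)" by fastforce
  ultimately show "e \<in> (\<lambda>f. (f, True)) ` (Exs - Eys)" by (cases b) auto
qed auto

lemma y_only_copies: "(\<lambda>f. (f, False)) ` (Eys - Exs) = {e\<in>copies. fst e \<notin> Exs}"
proof (intro equalityI subsetI)
  fix e assume "e \<in> {e\<in>copies. fst e \<notin> Exs}"
  moreover obtain f b where "e = (f, b)" by fastforce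
  ultimately show "e \<in> (\<lambda>f. (f, False)) ` (Eys - Exs)" by (cases b) auto
qed auto

lemma card_x_only: "card (Exs - Eys) + card (Exs \<inter> Eys) = card V"
  using card_Int_Diff[OF finite_x, of Eys] two_regular_card_edges[OF finite_V two_regular_x] by simp

lemma card_y_only: "card (Eys - Exs) + card (Exs \<inter> Eys) = card V"
  using card_Int_Diff[OF finite_y, of Exs] two_regular_card_edges[OF finite_V two_regular_y]
  by (simp add: Int_commute)

end

locale binary_solution = two_ham_cycles +
  assumes degree: "\<forall>v \<in> V. (\<Sum>e \<in> {e \<in> union_copies Exs Eys. v \<in> fst e}. X e) = 2"
    and x_only_bound: "(\<Sum>e \<in> (\<lambda>e. (e, True)) ` (Exs - Eys). X e)
             \<le> real (card V) - real (card (Exs \<inter> Eys)) - 2"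
    and y_only_bound: "(\<Sum>e \<in> (\<lambda>e. (e, False)) ` (Eys - Exs). X e)
             \<le> real (card V) - real (card (Exs \<inter> Eys)) - 2"
    and subtour: "\<forall>S. S \<subset> V \<and> card S \<ge> 2 \<longrightarrow>
             (\<Sum>e \<in> {e \<in> union_copies Exs Eys. fst e \<subseteq> S}. X e) \<le> real (card S) - 1"
    and cosubtour: "\<forall>S. S \<subset> V \<and> card S \<ge> 2 \<longrightarrow>
             (\<Sum>e \<in> {e \<in> union_copies Exs Eys. fst e \<subseteq> S}. X e)
               \<ge> real (card {e \<in> union_copies Exs Eys. fst e \<subseteq> S}) - real (card S) + 1"
begin

lemma degree_ones: "v \<in> V \<Longrightarrow> card {e\<in>ones. v \<in> fst e} = 2"
  using degree sum_X_filter[of "\<lambda>e. v \<in> fst e"] by simp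

lemma degree_zeros: "v \<in> V \<Longrightarrow> card {e\<in>zeros. v \<in> fst e} = 2"
  using degree_ones degree_copies card_copies_filter[of "\<lambda>e. v \<in> fst e"] by simp

lemma subtour_ones:
  assumes "S \<subset> V" "2 \<le> card S"
  shows "card {e\<in>ones. fst e \<subseteq> S} < card S"
proof -
  have "real (card {e\<in>ones. fst e \<subseteq> S}) \<le> real (card S) - 1"
    using subtour[rule_format, of S] assms sum_X_filter[of "\<lambda>e. fst e \<subseteq> S"] by simp
  then show ?thesis by linarith
qed

lemma subtour_zeros:
  assumes "S \<subset> V" "2 \<le> card S"
  shows "card {e\<in>zeros. fst e \<subseteq> S} < card S"
proof -
  have "real (card {e\<in>ones. fst e \<subseteq> S})
      \<ge> real (card {e\<in>copies. fst e \<subseteq> S}) - real (card S) + 1"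
    using cosubtour[rule_format, of S] assms sum_X_filter[of "\<lambda>e. fst e \<subseteq> S"] by simp
  then show ?thesis using card_copies_filter[of "\<lambda>e. fst e \<subseteq> S"] by linarith
qed

lemma ham_copies_ones: "ham_copies V ones"
  using finite_copies copy_edge degree_ones subtour_ones unfolding ones_def
  by (intro ham_copies_if_degree_subtour[OF finite_V card_V]) auto

lemma ham_copies_zeros: "ham_copies V zeros"
  using finite_copies copy_edge degree_zeros subtour_zeros unfolding zeros_def
  by (intro ham_copies_if_degree_subtour[OF finite_V card_V]) auto

lemma ones_ne_x: "fst ` ones \<noteq> Exs"
proof
  assume eq: "fst ` ones = Exs"
  have "(\<Sum>e \<in> (\<lambda>e. (e, True)) ` (Exs - Eys). X e) = real (card {e\<in>ones. fst e \<notin> Eys})"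
    using sum_X_filter x_only_copies by simp
  also have "card {e\<in>ones. fst e \<notin> Eys} = card (Exs - Eys)"
    using card_filter_inj_fst[of ones "\<lambda>f. f \<notin> Eys"] ham_copies_ones eq
    unfolding ham_copies_def by (simp add: set_diff_eq)
  finally show False using x_only_bound card_x_only by linarith
qed

lemma ones_ne_y: "fst ` ones \<noteq> Eys"
proof
  assume eq: "fst ` ones = Eys"
  have "(\<Sum>e \<in> (\<lambda>e. (e, False)) ` (Eys - Exs). X e) = real (card {e\<in>ones. fst e \<notin> Exs})"
    using sum_X_filter y_only_copies by simp
  also have "card {e\<in>ones. fst e \<notin> Exs} = card (Eys - Exs)"
    using card_filter_inj_fst[of ones "\<lambda>f. f \<notin> Exs"] ham_copies_ones eq
    unfolding ham_copies_def by (simp add: set_diff_eq)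
  finally show False using y_only_bound card_y_only by linarith
qed

end

locale ham_decomposition = two_ham_cycles +
  assumes ham_ones: "ham_copies V ones" and ham_zeros: "ham_copies V zeros"
    and ones_ne_x: "fst ` ones \<noteq> Exs" and ones_ne_y: "fst ` ones \<noteq> Eys"
begin

lemma inj_ones: "inj_on fst ones" and ham_cycle_ones: "ham_cycle V (fst ` ones)"
  using ham_ones unfolding ham_copies_def by auto

lemma two_regular_ones: "two_regular V (fst ` ones)"
  using ham_cycle_two_regular ham_cycle_ones card_V by blast

lemma sum_X_ones_filter: "(\<Sum>e\<in>{e\<in>copies. P (fst e)}. X e) = real (card {f\<in>fst ` ones. P f})"
  using sum_X_filter card_filter_inj_fst[OF inj_ones] by simp

lemma sum_copies: "(\<Sum>e\<in>copies. X e) = real (card V)"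
  using sum_X_ones_filter[of "\<lambda>_. True"]
    two_regular_card_edges[OF finite_V two_regular_ones] by simp

lemma degree_sum: "v \<in> V \<Longrightarrow> (\<Sum>e\<in>{e\<in>copies. v \<in> fst e}. X e) = 2"
  using sum_X_ones_filter[of "\<lambda>f. v \<in> f"] two_regular_ones unfolding two_regular_def by simp

lemma common_edges_ones: "Exs \<inter> Eys \<subseteq> fst ` ones"
proof
  fix f assume f: "f \<in> Exs \<inter> Eys"
  have "inj_on fst zeros" using ham_zeros unfolding ham_copies_def by blast
  then have "(f, True) \<notin> zeros \<or> (f, False) \<notin> zeros" unfolding inj_on_def by fastforce
  then have "(f, True) \<in> ones \<or> (f, False) \<in> ones"
    using f binary unfolding ones_def zeros_def by auto
  then show "f \<in> fst ` ones" by force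
qed

lemma x_only_sum:
  "(\<Sum>e \<in> (\<lambda>e. (e, True)) ` (Exs - Eys). X e) \<le> real (card V) - real (card (Exs \<inter> Eys)) - 2"
proof -
  have "fst ` ones - Eys \<subseteq> Exs" unfolding ones_def union_copies_def by auto
  then have "card (fst ` ones - Eys) + card (Exs \<inter> Eys) \<le> card (fst ` ones \<inter> Exs)"
    using common_edges_ones two_regular_finite[OF finite_V two_regular_ones]
    by (intro card_Diff_add_card_Int_le) auto
  moreover have "card (fst ` ones \<inter> Exs) + 2 \<le> card V"
    using two_regular_card_Int_le[OF finite_V two_regular_ones two_regular_x ones_ne_x] .
  ultimately show ?thesis
    using x_only_copies sum_X_ones_filter[of "\<lambda>f. f \<notin> Eys"] by (simp add: set_diff_eq)
qed

lemma y_only_sum: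
  "(\<Sum>e \<in> (\<lambda>e. (e, False)) ` (Eys - Exs). X e) \<le> real (card V) - real (card (Exs \<inter> Eys)) - 2"
proof -
  have "fst ` ones - Exs \<subseteq> Eys" unfolding ones_def union_copies_def by auto
  then have "card (fst ` ones - Exs) + card (Eys \<inter> Exs) \<le> card (fst ` ones \<inter> Eys)"
    using common_edges_ones two_regular_finite[OF finite_V two_regular_ones]
    by (intro card_Diff_add_card_Int_le) auto
  moreover have "card (fst ` ones \<inter> Eys) + 2 \<le> card V"
    using two_regular_card_Int_le[OF finite_V two_regular_ones two_regular_y ones_ne_y] .
  ultimately show ?thesis
    using y_only_copies sum_X_ones_filter[of "\<lambda>f. f \<notin> Exs"] by (simp add: set_diff_eq Int_commute)
qed

lemma subtour_sum:
  assumes "S \<subset> V" "2 \<le> card S"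
  shows "(\<Sum>e\<in>{e\<in>copies. fst e \<subseteq> S}. X e) \<le> real (card S) - 1"
proof -
  have "S \<noteq> {}" using assms(2) by auto
  then have "card {f\<in>fst ` ones. f \<subseteq> S} < card S"
    using ham_cycle_card_inside_less[OF finite_V ham_cycle_ones card_V assms(1)] by simp
  then show ?thesis using sum_X_ones_filter[of "\<lambda>f. f \<subseteq> S"] by simp
qed

lemma cosubtour_sum:
  assumes "S \<subset> V" "2 \<le> card S"
  shows "(\<Sum>e\<in>{e\<in>copies. fst e \<subseteq> S}. X e)
           \<ge> real (card {e\<in>copies. fst e \<subseteq> S}) - real (card S) + 1"
proof -
  have inj: "inj_on fst zeros" and ham: "ham_cycle V (fst ` zeros)"
    using ham_zeros unfolding ham_copies_def by auto
  have "S \<noteq> {}" using assms(2) by auto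
  then have "card {e\<in>zeros. fst e \<subseteq> S} < card S"
    using ham_cycle_card_inside_less[OF finite_V ham card_V assms(1)]
      card_filter_inj_fst[OF inj, of "\<lambda>f. f \<subseteq> S"]
    by simp
  then show ?thesis
    using sum_X_filter[of "\<lambda>e. fst e \<subseteq> S"] card_copies_filter[of "\<lambda>e. fst e \<subseteq> S"]
    by linarith
qed

end

theorem mainTheorem1:
  fixes V :: "'a set" and Exs Eys :: "'a set set" and X :: "'a set \<times> bool \<Rightarrow> real"
  assumes finV: "finite V" and n3: "card V \<ge> 3"
    and hx: "ham_cycle V Exs" and hy: "ham_cycle V Eys"
    and bin: "\<forall>e \<in> union_copies Exs Eys. X e \<in> {0, 1}"
  shows "( (\<Sum>e \<in> union_copies Exs Eys. X e) = real (card V)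
        \<and> (\<forall>v \<in> V. (\<Sum>e \<in> {e \<in> union_copies Exs Eys. v \<in> fst e}. X e) = 2)
        \<and> (\<Sum>e \<in> (\<lambda>e. (e, True)) ` (Exs - Eys). X e)
             \<le> real (card V) - real (card (Exs \<inter> Eys)) - 2
        \<and> (\<Sum>e \<in> (\<lambda>e. (e, False)) ` (Eys - Exs). X e)
             \<le> real (card V) - real (card (Exs \<inter> Eys)) - 2
        \<and> (\<forall>S. S \<subset> V \<and> card S \<ge> 2 \<longrightarrow>
             (\<Sum>e \<in> {e \<in> union_copies Exs Eys. fst e \<subseteq> S}. X e) \<le> real (card S) - 1)
        \<and> (\<forall>S. S \<subset> V \<and> card S \<ge> 2 \<longrightarrow>
             (\<Sum>e \<in> {e \<in> union_copies Exs Eys. fst e \<subseteq> S}. X e)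
               \<ge> real (card {e \<in> union_copies Exs Eys. fst e \<subseteq> S}) - real (card S) + 1))
     \<longleftrightarrow>
     (ham_copies V {e \<in> union_copies Exs Eys. X e = 1}
      \<and> ham_copies V {e \<in> union_copies Exs Eys. X e = 0}
      \<and> fst ` {e \<in> union_copies Exs Eys. X e = 1} \<noteq> Exs
      \<and> fst ` {e \<in> union_copies Exs Eys. X e = 1} \<noteq> Eys)"
proof -
  interpret two_ham_cycles V Exs Eys X
    using assms by unfold_locales
  show ?thesis
  proof (rule iffI, goal_cases)
    case 1
    then interpret binary_solution V Exs Eys X
      by unfold_locales blast+
    show ?case
      using ham_copies_ones ham_copies_zeros ones_ne_x ones_ne_y unfolding ones_def zeros_def
      by blast
  next
    case 2
    then interpret ham_decomposition V Exs Eys X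
      by unfold_locales (simp_all add: ones_def zeros_def)
    show ?case
      using sum_copies degree_sum x_only_sum y_only_sum subtour_sum cosubtour_sum by blast
  qed
qed

end
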